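(* Let $g_{00},g_{11},g_{22},g_{33}$ solve system (SL) with positive initial data satisfying $h_{22}\le h_{33}$. Then $g_{11}^{3/5}\,g_{22}$ is strictly increasing along the flow.
   Context: Let $\det h = h_{00}h_{11}h_{22}h_{33}$, $\beta = \frac{1}{6(\det h)^2}$, and $p(x,y,z) = x^4 - x^3(y+z) + x^2yz + x(-y^3+y^2z+yz^2-z^3) + y^4 - y^3z - yz^3 + z^4$, $q(x,y,z) = 5x^4 - 3x^3(y+z) + x^2yz + x(y^3-y^2z-yz^2+z^3) - 3y^4 + 3y^3z + 3yz^3 - 3z^4$. System (SL): $\dot g_{00} = -\beta\,p(-g_{11},g_{22},g_{33})\,g_{00}^3$, $\dot g_{11} = -\beta\,q(-g_{11},g_{22},g_{33})\,g_{00}^2g_{11}$, $\dot g_{22} = -\beta\,q(g_{22},-g_{11},g_{33})\,g_{00}^2g_{22}$, $\dot g_{33} = -\beta\,q(g_{33},-g_{11},g_{22})\,g_{00}^2g_{33}$, with $g_{ii}(0)=h_{ii}>0$. (This is Bach flow on $\mathbb{R}\times\widetilde{SL}(2,\mathbb{R})$ in a diagonalizing basis.) *)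

theory Defs
  imports "HOL-Analysis.Analysis"
begin

definition pSL :: "real \<Rightarrow> real \<Rightarrow> real \<Rightarrow> real" where
  "pSL x y z = x^4 - x^3*(y+z) + x^2*y*z + x*(- (y^3) + y^2*z + y*z^2 - z^3)
              + y^4 - y^3*z - y*z^3 + z^4"

definition qSL :: "real \<Rightarrow> real \<Rightarrow> real \<Rightarrow> real" where
  "qSL x y z = 5*x^4 - 3*x^3*(y+z) + x^2*y*z + x*(y^3 - y^2*z - y*z^2 + z^3)
              - 3*y^4 + 3*y^3*z + 3*y*z^3 - 3*z^4"

definition betaSL :: "real \<Rightarrow> real \<Rightarrow> real \<Rightarrow> real \<Rightarrow> real" where
  "betaSL h00 h11 h22 h33 = 1 / (6 * (h00*h11*h22*h33)^2)"

end

theory Submission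
  imports Defs
begin

(* Along (SL) the logarithmic derivative of g11^(3/5) g22 is
   -beta g00^2 (3/5 q(-g11,g22,g33) + q(g22,-g11,g33)).  Writing g33 = g22 + w, this
   polynomial is minus a polynomial in g11, g22, w with nonnegative coefficients and the
   positive term 2/5 g11^3 g22, so the derivative is positive as long as g11, g22 > 0 and
   g22 <= g33.  These three conditions persist because g11, g22 and g33 - g22 each solve a
   linear equation f' = a f, hence equal f(0) exp (integral a). *)

lemma linear_ode_solution:
  fixes f a :: "real \<Rightarrow> real"
  assumes t: "t \<in> {t0..<T}"
    and deriv: "\<And>s. s \<in> {t0..<T} \<Longrightarrow> (f has_real_derivative a s * f s) (at s within {t0..<T})"
    and cont: "continuous_on {t0..<T} a"
  shows "f t = f t0 * exp (integral {t0..t} a)"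
proof -
  have sub: "{t0..t} \<subseteq> {t0..<T}" using t by auto
  define A where "A s = integral {t0..s} a" for s
  have dA: "(A has_real_derivative a s) (at s within {t0..t})" if "s \<in> {t0..t}" for s
    using integral_has_real_derivative[OF continuous_on_subset[OF cont sub]] that
    unfolding A_def by blast
  define w where "w s = f s * exp (- A s)" for s
  have "(w has_real_derivative 0) (at s within {t0..t})" if s: "s \<in> {t0..t}" for s
  proof -
    have "(f has_real_derivative a s * f s) (at s within {t0..t})"
      using DERIV_subset[OF deriv sub] s sub by auto
    from DERIV_mult'[OF this DERIV_chain2[OF DERIV_exp DERIV_minus[OF dA[OF s]]]]
    show ?thesis unfolding w_def by (simp add: algebra_simps)
  qed
  then obtain c where "\<forall>s\<in>{t0..t}. w s = c"
    using has_field_derivative_zero_constant[of "{t0..t}" w] by auto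
  then have "w t = w t0" using t by auto
  then show ?thesis
    unfolding w_def A_def by (simp add: exp_minus field_simps)
qed

lemma has_real_derivative_powr_mult:
  fixes f g :: "real \<Rightarrow> real"
  assumes pos: "f x > 0"
    and df: "(f has_real_derivative a * f x) (at x within S)"
    and dg: "(g has_real_derivative b * g x) (at x within S)"
  shows "((\<lambda>t. f t powr c * g t) has_real_derivative (c * a + b) * (f x powr c * g x)) (at x within S)"
proof -
  have "((\<lambda>t. f t powr c * g t) has_real_derivative
      f x powr c * (b * g x) + c * f x powr (c - 1) * (a * f x) * g x) (at x within S)"
    by (rule DERIV_mult'[OF DERIV_chain2[OF has_real_derivative_powr[OF pos] df] dg])
  moreover have "f x powr c * (b * g x) + c * f x powr (c - 1) * (a * f x) * g x
      = (c * a + b) * (f x powr c * g x)"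
    using pos by (simp add: powr_diff field_simps)
  ultimately show ?thesis by simp
qed

lemma linear_ode_pos:
  fixes f a :: "real \<Rightarrow> real"
  assumes "t \<in> {t0..<T}"
    and "\<And>s. s \<in> {t0..<T} \<Longrightarrow> (f has_real_derivative a s * f s) (at s within {t0..<T})"
    and "continuous_on {t0..<T} a" and "f t0 > 0"
  shows "f t > 0"
  using linear_ode_solution[OF assms(1-3)] assms(4) by simp

lemma linear_ode_nonneg:
  fixes f a :: "real \<Rightarrow> real"
  assumes "t \<in> {t0..<T}"
    and "\<And>s. s \<in> {t0..<T} \<Longrightarrow> (f has_real_derivative a s * f s) (at s within {t0..<T})"
    and "continuous_on {t0..<T} a" and "f t0 \<ge> 0"
  shows "f t \<ge> 0"
  using linear_ode_solution[OF assms(1-3)] assms(4) by simp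

lemma strict_mono_on_if_derivative_pos:
  fixes f f' :: "real \<Rightarrow> real"
  assumes S: "is_interval S"
    and deriv: "\<And>x. x \<in> S \<Longrightarrow> (f has_real_derivative f' x) (at x within S)"
    and pos: "\<And>x. x \<in> S \<Longrightarrow> f' x > 0"
  shows "strict_mono_on S f"
proof (rule strict_mono_onI)
  fix r s assume r: "r \<in> S" and s: "s \<in> S" and "r < s"
  have sub: "{r..s} \<subseteq> S"
    using mem_is_interval_1_I[OF S r s] by auto
  have d: "(f has_derivative (*) (f' x)) (at x within {r..s})" if "r \<le> x" "x \<le> s" for x
    using DERIV_subset[OF deriv sub] that sub unfolding has_field_derivative_def by auto
  obtain x where x: "x \<in> {r<..<s}" and mvt: "f s - f r = f' x * (s - r)"
    using mvt_simple[OF \<open>r < s\<close> d] by blast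
  have "x \<in> S" using x sub by auto
  then have "f' x * (s - r) > 0"
    using pos \<open>r < s\<close> by simp
  with mvt show "f r < f s" by linarith
qed

lemma qSL_combination_neg:
  fixes x y z :: real
  assumes "x > 0" "y > 0" "y \<le> z"
  shows "3/5 * qSL (- x) y z + qSL y (- x) z < 0"
proof -
  define w where "w = z - y"
  have w: "w \<ge> 0" "z = y + w" using assms(3) unfolding w_def by simp_all
  have "3/5 * qSL (- x) y z + qSL y (- x) z = - (2/5*x^3*y + (6/5*x^3*w + 2/5*x^2*y^2
     + 2/5*x^2*y*w + 8*x*y^2*w + 46/5*x*y*w^2 + 18/5*x*w^3 + 12*y^3*w + 102/5*y^2*w^2
     + 82/5*y*w^3 + 24/5*w^4))"
    unfolding qSL_def w(2) by algebra
  moreover have "0 < 2/5*x^3*y" using assms by simp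
  moreover have "0 \<le> 6/5*x^3*w + 2/5*x^2*y^2 + 2/5*x^2*y*w + 8*x*y^2*w + 46/5*x*y*w^2
     + 18/5*x*w^3 + 12*y^3*w + 102/5*y^2*w^2 + 82/5*y*w^3 + 24/5*w^4"
    using assms w by (intro add_nonneg_nonneg mult_nonneg_nonneg) auto
  ultimately show ?thesis by linarith
qed

definition qSL_swap_quotient :: "real \<Rightarrow> real \<Rightarrow> real \<Rightarrow> real" where
  "qSL_swap_quotient x y z = -3*x^4 - x^3*y - x^3*z - x^2*y*z + 3*x*y^3
     + 5*x*y^2*z + 5*x*y*z^2 + 3*x*z^3 + 5*y^4 + 5*y^3*z + 4*y^2*z^2 + 5*y*z^3 + 5*z^4"

lemma qSL_swap_difference:
  "qSL z (- x) y * z - qSL y (- x) z * y = (z - y) * qSL_swap_quotient x y z"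
  unfolding qSL_def qSL_swap_quotient_def by algebra

text \<open>System (SL) with the constant \<open>\<beta>\<close> replaced by an arbitrary \<open>B > 0\<close>.\<close>

locale SL_flow =
  fixes g00 g11 g22 g33 :: "real \<Rightarrow> real" and T B :: real
  assumes B_pos: "B > 0"
    and init_pos: "g00 0 > 0" "g11 0 > 0" "g22 0 > 0"
    and init_ord: "g22 0 \<le> g33 0"
    and ode00: "\<And>t. t \<in> {0..<T} \<Longrightarrow> (g00 has_real_derivative
        (- B * pSL (- g11 t) (g22 t) (g33 t) * g00 t ^ 3)) (at t within {0..<T})"
    and ode11: "\<And>t. t \<in> {0..<T} \<Longrightarrow> (g11 has_real_derivative
        (- B * qSL (- g11 t) (g22 t) (g33 t) * g00 t ^ 2 * g11 t)) (at t within {0..<T})"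
    and ode22: "\<And>t. t \<in> {0..<T} \<Longrightarrow> (g22 has_real_derivative
        (- B * qSL (g22 t) (- g11 t) (g33 t) * g00 t ^ 2 * g22 t)) (at t within {0..<T})"
    and ode33: "\<And>t. t \<in> {0..<T} \<Longrightarrow> (g33 has_real_derivative
        (- B * qSL (g33 t) (- g11 t) (g22 t) * g00 t ^ 2 * g33 t)) (at t within {0..<T})"
begin

lemmas continuous_on_solution =
  DERIV_continuous_on[OF ode00] DERIV_continuous_on[OF ode11]
  DERIV_continuous_on[OF ode22] DERIV_continuous_on[OF ode33]

lemma g00_pos:
  assumes t: "t \<in> {0..<T}"
  shows "g00 t > 0"
proof (rule linear_ode_pos[OF t])
  show "(g00 has_real_derivative (- B * pSL (- g11 s) (g22 s) (g33 s) * g00 s ^ 2) * g00 s)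
      (at s within {0..<T})" if "s \<in> {0..<T}" for s
    using ode00[OF that] by (simp add: power2_eq_square power3_eq_cube mult.assoc)
  show "continuous_on {0..<T} (\<lambda>s. - B * pSL (- g11 s) (g22 s) (g33 s) * g00 s ^ 2)"
    unfolding pSL_def by (intro continuous_intros continuous_on_solution)
qed (fact init_pos)

lemma g11_pos:
  assumes t: "t \<in> {0..<T}"
  shows "g11 t > 0"
proof (rule linear_ode_pos[OF t ode11])
  show "continuous_on {0..<T} (\<lambda>s. - B * qSL (- g11 s) (g22 s) (g33 s) * g00 s ^ 2)"
    unfolding qSL_def by (intro continuous_intros continuous_on_solution)
qed (use init_pos in auto)

lemma g22_pos:
  assumes t: "t \<in> {0..<T}"
  shows "g22 t > 0"
proof (rule linear_ode_pos[OF t ode22])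
  show "continuous_on {0..<T} (\<lambda>s. - B * qSL (g22 s) (- g11 s) (g33 s) * g00 s ^ 2)"
    unfolding qSL_def by (intro continuous_intros continuous_on_solution)
qed (use init_pos in auto)

lemma g22_le_g33:
  assumes t: "t \<in> {0..<T}"
  shows "g22 t \<le> g33 t"
proof -
  have "g33 t - g22 t \<ge> 0"
  proof (rule linear_ode_nonneg[where f = "\<lambda>s. g33 s - g22 s", OF t])
    show "((\<lambda>s. g33 s - g22 s) has_real_derivative
        (- B * g00 s ^ 2 * qSL_swap_quotient (g11 s) (g22 s) (g33 s)) * (g33 s - g22 s))
        (at s within {0..<T})" if "s \<in> {0..<T}" for s
    proof -
      have eq: "- B * qSL (g33 s) (- g11 s) (g22 s) * g00 s ^ 2 * g33 s
            - - B * qSL (g22 s) (- g11 s) (g33 s) * g00 s ^ 2 * g22 s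
          = (- B * g00 s ^ 2 * qSL_swap_quotient (g11 s) (g22 s) (g33 s)) * (g33 s - g22 s)"
        using qSL_swap_difference[of "g33 s" "g11 s" "g22 s"] by algebra
      show ?thesis
        using DERIV_diff[OF ode33[OF that] ode22[OF that]] unfolding eq .
    qed
    show "continuous_on {0..<T} (\<lambda>s. - B * g00 s ^ 2 * qSL_swap_quotient (g11 s) (g22 s) (g33 s))"
      unfolding qSL_swap_quotient_def by (intro continuous_intros continuous_on_solution)
  qed (use init_ord in simp)
  then show ?thesis by simp
qed

lemma invariant_has_derivative:
  assumes t: "t \<in> {0..<T}"
  shows "((\<lambda>t. g11 t powr (3/5) * g22 t) has_real_derivative
    - B * g00 t ^ 2 * (3/5 * qSL (- g11 t) (g22 t) (g33 t) + qSL (g22 t) (- g11 t) (g33 t))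
      * (g11 t powr (3/5) * g22 t)) (at t within {0..<T})"
proof -
  have eq: "3/5 * (- B * qSL (- g11 t) (g22 t) (g33 t) * g00 t ^ 2)
        + - B * qSL (g22 t) (- g11 t) (g33 t) * g00 t ^ 2
      = - B * g00 t ^ 2 * (3/5 * qSL (- g11 t) (g22 t) (g33 t) + qSL (g22 t) (- g11 t) (g33 t))"
    by algebra
  show ?thesis
    using has_real_derivative_powr_mult[where c = "3/5", OF g11_pos[OF t] ode11[OF t] ode22[OF t]]
    unfolding eq .
qed

lemma invariant_strict_mono: "strict_mono_on {0..<T} (\<lambda>t. g11 t powr (3/5) * g22 t)"
proof (rule strict_mono_on_if_derivative_pos[OF _ invariant_has_derivative])
  fix t assume t: "t \<in> {0..<T}"
  have "3/5 * qSL (- g11 t) (g22 t) (g33 t) + qSL (g22 t) (- g11 t) (g33 t) < 0"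
    by (rule qSL_combination_neg[OF g11_pos[OF t] g22_pos[OF t] g22_le_g33[OF t]])
  moreover have "B * g00 t ^ 2 > 0" and "g11 t powr (3/5) * g22 t > 0"
    using B_pos g00_pos[OF t] g11_pos[OF t] g22_pos[OF t] by simp_all
  ultimately show "- B * g00 t ^ 2 * (3/5 * qSL (- g11 t) (g22 t) (g33 t) + qSL (g22 t) (- g11 t) (g33 t))
      * (g11 t powr (3/5) * g22 t) > 0"
    by (simp add: mult_pos_neg mult_neg_pos)
qed simp

end

theorem lemma5p12:
  fixes g00 g11 g22 g33 :: "real \<Rightarrow> real" and T h00 h11 h22 h33 :: real
  assumes T: "T > 0"
    and pos: "h00 > 0" "h11 > 0" "h22 > 0" "h33 > 0"
    and ord: "h22 \<le> h33"
    and init: "g00 0 = h00" "g11 0 = h11" "g22 0 = h22" "g33 0 = h33"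
    and ode00: "\<And>t. t \<in> {0..<T} \<Longrightarrow> (g00 has_real_derivative
        (- betaSL h00 h11 h22 h33 * pSL (- g11 t) (g22 t) (g33 t) * g00 t ^ 3)) (at t within {0..<T})"
    and ode11: "\<And>t. t \<in> {0..<T} \<Longrightarrow> (g11 has_real_derivative
        (- betaSL h00 h11 h22 h33 * qSL (- g11 t) (g22 t) (g33 t) * g00 t ^ 2 * g11 t)) (at t within {0..<T})"
    and ode22: "\<And>t. t \<in> {0..<T} \<Longrightarrow> (g22 has_real_derivative
        (- betaSL h00 h11 h22 h33 * qSL (g22 t) (- g11 t) (g33 t) * g00 t ^ 2 * g22 t)) (at t within {0..<T})"
    and ode33: "\<And>t. t \<in> {0..<T} \<Longrightarrow> (g33 has_real_derivative
        (- betaSL h00 h11 h22 h33 * qSL (g33 t) (- g11 t) (g22 t) * g00 t ^ 2 * g33 t)) (at t within {0..<T})"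
  shows "strict_mono_on {0..<T} (\<lambda>t. g11 t powr (3/5) * g22 t)"
proof -
  interpret SL_flow g00 g11 g22 g33 T "betaSL h00 h11 h22 h33"
    using pos ord init ode00 ode11 ode22 ode33 by unfold_locales (auto simp: betaSL_def)
  show ?thesis by (rule invariant_strict_mono)
qed

end
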